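(* Let $k\ge1$, let $C=z^{-k}C_k+\dots+z^{-1}C_1\in\mathfrak t_k^*$ with $C_k\in\mathfrak t^{reg}$, and for $X\in\mathfrak g$ consider $\phi_X:B_k^{od}\to\mathbb C$, $b\mapsto\langle\mathrm{Ad}_bC,X\rangle$. Then $\phi_X$ is affine linear in the variables $(b_{\lfloor(k+1)/2\rfloor},\dots,b_{k-1})$. For fixed values of $b_1,\dots,b_{\lfloor(k+1)/2\rfloor-1}$, $\phi_X$ is independent of $b_{\lfloor(k+1)/2\rfloor},\dots,b_{k-1}$ if and only if $X\in\mathfrak t$ and $b_1,\dots,b_{\lfloor(k-2)/2\rfloor}$ commute with $X$. In that case, if $k$ is odd and $b_{(k-1)/2}=b^l+b^u$ with $b^l$ strictly lower and $b^u$ strictly upper triangular, then $\phi_X$ is affine linear in $b^u$, and it is independent of $b^u$ if and only if $b^l$ commutes with $X$.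
   Context: $\mathfrak g=\mathfrak{gl}_n(\mathbb C)$, $\mathfrak t$ the diagonal matrices, $\mathfrak t^{reg}$ diagonal matrices with distinct eigenvalues, $\mathfrak g^{od}$ matrices with zero diagonal. $G_k=GL_n(\mathbb C[[z]]/z^k)$; $\mathfrak t_k^*$, $\mathfrak g_k^*$ identified with $\{z^{-k}Y_k+\dots+z^{-1}Y_1:Y_i\in\mathfrak g\}$ (resp. $Y_i\in\mathfrak t$) via the pairing with $\mathfrak g_k=\mathfrak{gl}_n(\mathbb C[[z]]/z^k)$ given by $\langle Y,X\rangle=\mathrm{Res}_0\mathrm{tr}(YX)=\sum_{i=1}^k\mathrm{tr}(Y_iX_{i-1})$; a constant $X\in\mathfrak g$ is viewed in $\mathfrak g_k$, so $\langle Y,X\rangle=\mathrm{tr}(Y_1X)$. $\mathrm{Ad}_bY=bYb^{-1}$. $B_k^{od}=\{1+zb_1+\dots+z^{k-1}b_{k-1}:b_i\in\mathfrak g^{od}\}\subset G_k$. *)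

theory Defs
  imports "HOL-Analysis.Analysis"
begin

text \<open>Matrices in gl_n(C) are complex^'n^'n, with the index type 'n finite and
linearly ordered (the order is needed for lower/upper triangularity).\<close>

definition is_diag :: "complex^'n^'n \<Rightarrow> bool" where
  "is_diag A \<longleftrightarrow> (\<forall>i j. i \<noteq> j \<longrightarrow> A$i$j = 0)"

definition is_diag_reg :: "complex^'n^'n \<Rightarrow> bool" where
  "is_diag_reg A \<longleftrightarrow> is_diag A \<and> (\<forall>i j. i \<noteq> j \<longrightarrow> A$i$i \<noteq> A$j$j)"

definition is_offdiag :: "complex^'n^'n \<Rightarrow> bool" where
  "is_offdiag A \<longleftrightarrow> (\<forall>i. A$i$i = 0)"

definition strictly_lower :: "complex^('n::{finite,linorder})^('n::{finite,linorder}) \<Rightarrow> bool" where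
  "strictly_lower A \<longleftrightarrow> (\<forall>i j. i \<le> j \<longrightarrow> A$i$j = 0)"

definition strictly_upper :: "complex^('n::{finite,linorder})^('n::{finite,linorder}) \<Rightarrow> bool" where
  "strictly_upper A \<longleftrightarrow> (\<forall>i j. j \<le> i \<longrightarrow> A$i$j = 0)"

definition cscale :: "complex \<Rightarrow> complex^'n^'n \<Rightarrow> complex^'n^'n" where
  "cscale c A = (\<chi> i j. c * A$i$j)"

definition clinear_fun :: "(complex^'n^'n \<Rightarrow> complex) \<Rightarrow> bool" where
  "clinear_fun L \<longleftrightarrow> (\<forall>x y. L (x + y) = L x + L y) \<and> (\<forall>c x. L (cscale c x) = c * L x)"

text \<open>An element b = 1 + z b_1 + ... + z^(k-1) b_(k-1) of G_k is encoded by
the function i \<mapsto> b_i (values at 0 and at i \<ge> k are ignored);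
its coefficient sequence is bser.\<close>
definition bser :: "nat \<Rightarrow> (nat \<Rightarrow> complex^'n^'n) \<Rightarrow> nat \<Rightarrow> complex^'n^'n" where
  "bser k b i = (if i = 0 then mat 1 else if i < k then b i else 0)"

definition in_Bod :: "nat \<Rightarrow> (nat \<Rightarrow> complex^'n^'n) \<Rightarrow> bool" where
  "in_Bod k b \<longleftrightarrow> (\<forall>i. 1 \<le> i \<and> i < k \<longrightarrow> is_offdiag (b i))"

text \<open>Coefficients of the inverse power series b^(-1) (relevant modulo z^k):
  b^(-1) b = 1 determines them recursively.\<close>
function tinv :: "nat \<Rightarrow> (nat \<Rightarrow> complex^'n^'n) \<Rightarrow> nat \<Rightarrow> complex^'n^'n" where
  "tinv k b 0 = mat 1"
| "tinv k b (Suc j) = - (\<Sum>i\<in>{1..Suc j}. bser k b i ** tinv k b (Suc j - i))"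
  by pat_completeness auto
termination
  by (relation "Wellfounded.measure (\<lambda>(k, b, j). j)") auto

text \<open>Coadjoint action: coefficient of z^(-m) (1 \<le> m \<le> k) of b C b^(-1),
where C = sum_{l=1..k} z^(-l) C_l.\<close>
definition coadj :: "nat \<Rightarrow> (nat \<Rightarrow> complex^'n^'n) \<Rightarrow> (nat \<Rightarrow> complex^'n^'n) \<Rightarrow> nat \<Rightarrow> complex^'n^'n" where
  "coadj k b C m = (\<Sum>l\<in>{1..k}. \<Sum>i<k. \<Sum>j<k.
       if i + j + m = l then bser k b i ** C l ** tinv k b j else 0)"

text \<open>Pairing of Y = sum z^(-i) Y_i in g_k^* with X = sum z^i X_i in g_k:
  Res_0 tr(Y X) = sum_{i=1..k} tr(Y_i X_(i-1)).\<close>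
definition pairing :: "nat \<Rightarrow> (nat \<Rightarrow> complex^'n^'n) \<Rightarrow> (nat \<Rightarrow> complex^'n^'n) \<Rightarrow> complex" where
  "pairing k Y Xs = (\<Sum>i\<in>{1..k}. trace (Y i ** Xs (i - 1)))"

definition const_gk :: "complex^'n^'n \<Rightarrow> nat \<Rightarrow> complex^'n^'n" where
  "const_gk X i = (if i = 0 then X else 0)"

definition phi :: "nat \<Rightarrow> (nat \<Rightarrow> complex^'n^'n) \<Rightarrow> complex^'n^'n \<Rightarrow> (nat \<Rightarrow> complex^'n^'n) \<Rightarrow> complex" where
  "phi k C X b = pairing k (coadj k b C) (const_gk X)"

end

theory Submission
  imports Defs "HOL-Computational_Algebra.Formal_Power_Series" "HOL-Library.Function_Algebras"
begin

text \<open>Regard b and its inverse as matrix power series. Then phi_X(b) = sum_l tr(C_l W_(l-1))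
with W = b^(-1) X b. If b = b' + d with d of order at least m and 2m \<ge> k, then
b^(-1) = b'^(-1) - b'^(-1) d b'^(-1) modulo z^k, so phi_X is affine in the coefficients of d,
with linear part the differential of phi_X at b'. When b'_1, ..., b'_(r-1) commute with X, the
differential applied to z^(k-1-r) M only sees the top coefficient C_k and equals
tr(C_k [X,M]) for r = 0 and -tr(C_k (b'_r [X,M] + M [X,b'_r])) for r \<ge> 1; since C_k is
regular, its vanishing for all off-diagonal M forces X to be diagonal, resp. [X,b'_r] = 0.
For k = 2q+1 the expansion to second order in b_q gives phi_X = tr(C_1 X) + tr(C_k b_q [b_q,X]),
and the entries of this quadratic form pair the strictly lower part of b_q with its strictly
upper part.\<close>

type_synonym 'n cmat = "complex^'n^'n"

lemma matrix_add_rdistrib: "((A::'n::finite cmat) + B) ** C = A ** C + B ** C"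
  by (vector matrix_matrix_mult_def sum.distrib[symmetric] field_simps)

lemma matrix_diff_ldistrib: "(A::'n::finite cmat) ** (B - C) = A ** B - A ** C"
  by (vector matrix_matrix_mult_def sum_subtractf[symmetric] field_simps)

lemma matrix_diff_rdistrib: "((A::'n::finite cmat) - B) ** C = A ** C - B ** C"
  by (vector matrix_matrix_mult_def sum_subtractf[symmetric] field_simps)

lemma matrix_neg_left: "(- (A::'n::finite cmat)) ** B = - (A ** B)"
  by (vector matrix_matrix_mult_def sum_negf[symmetric])

lemma matrix_neg_right: "(A::'n::finite cmat) ** (- B) = - (A ** B)"
  by (vector matrix_matrix_mult_def sum_negf[symmetric])

lemma matrix_sum_left: "(\<Sum>i\<in>S. f i :: 'n cmat) ** (B::'n::finite cmat) = (\<Sum>i\<in>S. f i ** B)"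
  by (induction S rule: infinite_finite_induct) (auto simp: matrix_add_rdistrib)

lemma matrix_sum_right: "(B::'n::finite cmat) ** (\<Sum>i\<in>S. f i :: 'n cmat) = (\<Sum>i\<in>S. B ** f i)"
  by (induction S rule: infinite_finite_induct) (auto simp: matrix_add_ldistrib)

lemma trace_zero: "trace (0::'n::finite cmat) = 0"
  by (simp add: trace_def)

lemma trace_neg: "trace (- (A::'n::finite cmat)) = - trace A"
  by (simp add: trace_def sum_negf)

lemma trace_sum: "trace (\<Sum>i\<in>S. f i :: 'n::finite cmat) = (\<Sum>i\<in>S. trace (f i))"
  by (induction S rule: infinite_finite_induct) (auto simp: trace_add trace_zero)

lemma trace_mult_cycle3: "trace ((A::'n::finite cmat) ** B ** D) = trace (D ** A ** B)"
  by (metis trace_mul_sym matrix_mul_assoc)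

lemma commute_mult:
  "A ** X = X ** A \<Longrightarrow> B ** X = X ** B \<Longrightarrow> (A ** B) ** X = X ** ((A::'n::finite cmat) ** B)"
  by (metis matrix_mul_assoc)

lemma commute_sum:
  "(\<And>i. i \<in> S \<Longrightarrow> f i ** X = X ** f i) \<Longrightarrow> (\<Sum>i\<in>S. f i) ** X = X ** (\<Sum>i\<in>S. f i :: 'n::finite cmat)"
  by (simp add: matrix_sum_left matrix_sum_right)

lemma commute_neg: "A ** X = X ** A \<Longrightarrow> (- A) ** X = X ** (- (A::'n::finite cmat))"
  by (simp add: matrix_neg_left matrix_neg_right)

lemma trace_mult_commutator_eq_0:
  assumes "A ** X = X ** (A::'n::finite cmat)"
  shows "trace (A ** (X ** M - M ** X)) = 0"
proof -
  have "trace (A ** (M ** X)) = trace (X ** A ** M)"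
    by (metis trace_mult_cycle3 matrix_mul_assoc)
  also have "\<dots> = trace (A ** (X ** M))" using assms by (simp add: matrix_mul_assoc)
  finally show ?thesis by (simp add: matrix_diff_ldistrib trace_sub)
qed

lemma cscale_mult_right: "(A::'n::finite cmat) ** cscale c B = cscale c (A ** B)"
  by (vector cscale_def matrix_matrix_mult_def sum_distrib_left algebra_simps)

lemma cscale_mult_left: "cscale c (A::'n::finite cmat) ** B = cscale c (A ** B)"
  by (vector cscale_def matrix_matrix_mult_def sum_distrib_left algebra_simps)

lemma cscale_add: "cscale c ((A::'n::finite cmat) + B) = cscale c A + cscale c B"
  by (vector cscale_def algebra_simps)

lemma cscale_diff: "cscale c ((A::'n::finite cmat) - B) = cscale c A - cscale c B"
  by (vector cscale_def algebra_simps)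

lemma cscale_zero: "cscale c (0::'n::finite cmat) = 0"
  by (vector cscale_def)

lemma cscale_sum: "cscale c (\<Sum>i\<in>S. f i :: 'n::finite cmat) = (\<Sum>i\<in>S. cscale c (f i))"
  by (induction S rule: infinite_finite_induct) (auto simp: cscale_add cscale_zero)

lemma trace_cscale: "trace (cscale c (A::'n::finite cmat)) = c * trace A"
  by (simp add: trace_def cscale_def sum_distrib_left)

lemma diag_mult_right_entry: "is_diag D \<Longrightarrow> ((A::'n::finite cmat) ** D) $ i $ j = A$i$j * D$j$j"
proof -
  assume d: "is_diag D"
  have "(A ** D) $ i $ j = (\<Sum>l\<in>UNIV. if l = j then A$i$l * D$l$j else 0)"
    unfolding matrix_matrix_mult_def vec_lambda_beta
    by (rule sum.cong) (use d in \<open>auto simp: is_diag_def\<close>)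
  then show ?thesis by simp
qed

lemma diag_mult_left_entry: "is_diag D \<Longrightarrow> (D ** (A::'n::finite cmat)) $ i $ j = D$i$i * A$i$j"
proof -
  assume d: "is_diag D"
  have "(D ** A) $ i $ j = (\<Sum>l\<in>UNIV. if l = i then D$i$l * A$l$j else 0)"
    unfolding matrix_matrix_mult_def vec_lambda_beta
    by (rule sum.cong) (use d in \<open>auto simp: is_diag_def\<close>)
  then show ?thesis by simp
qed

lemma diag_commute: "is_diag A \<Longrightarrow> is_diag B \<Longrightarrow> (A::'n::finite cmat) ** B = B ** A"
  by (simp add: vec_eq_iff diag_mult_left_entry diag_mult_right_entry)
    (metis is_diag_def mult.commute mult_zero_left mult_zero_right)

lemma commute_diag_iff_entries:
  assumes "is_diag X"
  shows "A ** X = X ** (A::'n::finite cmat) \<longleftrightarrow> (\<forall>p q. (X$p$p - X$q$q) * A$p$q = 0)"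
  using assms by (simp add: vec_eq_iff diag_mult_left_entry diag_mult_right_entry algebra_simps)
    metis

lemma trace_diag_mult: "is_diag D \<Longrightarrow> trace (D ** Y) = (\<Sum>p\<in>UNIV. D$p$p * Y$p$p)"
  by (simp add: trace_def diag_mult_left_entry)

definition elem_mat :: "'n::finite \<Rightarrow> 'n \<Rightarrow> 'n cmat"
  where "elem_mat p q = (\<chi> i j. if i = p \<and> j = q then 1 else 0)"

lemma trace_mult_elem_mat: "trace (A ** elem_mat p q) = A $ q $ p"
proof -
  have "trace (A ** elem_mat p q)
      = (\<Sum>i\<in>UNIV. \<Sum>j\<in>UNIV. A$i$j * (if j = p \<and> i = q then 1 else 0))"
    by (simp add: trace_def matrix_matrix_mult_def elem_mat_def)
  also have "\<dots> = (\<Sum>i\<in>UNIV. if i = q then A$i$p else 0)"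
    by (rule sum.cong[OF refl]) (auto simp: if_distrib cong: if_cong)
  finally show ?thesis by simp
qed

lemma offdiag_elem_mat: "p \<noteq> q \<Longrightarrow> is_offdiag (elem_mat p q)"
  by (simp add: is_offdiag_def elem_mat_def)

text \<open>Testing against the elementary matrices elem_mat q p reads off the (p,q) entry, and
the regularity of C cancels the factor C$p$p - C$q$q.\<close>

lemma diag_if_trace_commutator_vanishes:
  fixes C X :: "'n::finite cmat"
  assumes C: "is_diag_reg C"
    and H: "\<forall>M. is_offdiag M \<longrightarrow> trace (C ** (X ** M - M ** X)) = 0"
  shows "is_diag X"
  unfolding is_diag_def
proof (intro allI impI)
  fix p q :: 'n assume pq: "p \<noteq> q"
  have "trace (C ** (X ** elem_mat q p - elem_mat q p ** X))
      = trace ((C ** X - X ** C) ** elem_mat q p)"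
    by (simp add: matrix_diff_ldistrib matrix_diff_rdistrib trace_sub matrix_mul_assoc)
      (metis trace_mult_cycle3)
  also have "\<dots> = (C ** X - X ** C) $ p $ q" by (rule trace_mult_elem_mat)
  also have "\<dots> = X$p$q * (C$p$p - C$q$q)"
    using C by (simp add: is_diag_reg_def diag_mult_left_entry diag_mult_right_entry algebra_simps)
  finally have "X$p$q * (C$p$p - C$q$q) = 0" using H offdiag_elem_mat pq by metis
  then show "X$p$q = 0" using C pq by (simp add: is_diag_reg_def)
qed

lemma commute_if_trace_commutators_vanish:
  fixes C X B :: "'n::finite cmat"
  assumes C: "is_diag_reg C" and X: "is_diag X"
    and H: "\<forall>M. is_offdiag M \<longrightarrow>
      - trace (C ** B ** (X ** M - M ** X)) - trace (C ** M ** (X ** B - B ** X)) = 0"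
  shows "B ** X = X ** B"
proof -
  have Cd: "is_diag C" using C by (simp add: is_diag_reg_def)
  have as_trace: "- trace (C ** B ** (X ** M - M ** X)) - trace (C ** M ** (X ** B - B ** X))
     = trace ((X ** C ** B - C ** B ** X - X ** B ** C + B ** X ** C) ** M)" for M
  proof -
    have "trace (C ** B ** M ** X) = trace (X ** C ** B ** M)"
      "trace (C ** M ** X ** B) = trace (X ** B ** C ** M)"
      "trace (C ** M ** B ** X) = trace (B ** X ** C ** M)"
      by (metis trace_mul_sym matrix_mul_assoc)+
    then show ?thesis
      by (simp add: matrix_diff_ldistrib matrix_diff_rdistrib matrix_add_rdistrib trace_sub
          trace_add matrix_mul_assoc)
  qed
  have "(X$p$p - X$q$q) * B$p$q = 0" for p q
  proof (cases "p = q")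
    case False
    have "trace ((X ** C ** B - C ** B ** X - X ** B ** C + B ** X ** C) ** elem_mat q p) = 0"
      using H offdiag_elem_mat[of q p] False as_trace by metis
    then have "(X ** C ** B - C ** B ** X - X ** B ** C + B ** X ** C) $ p $ q = 0"
      by (simp add: trace_mult_elem_mat)
    then have "(X$p$p - X$q$q) * B$p$q * (C$p$p - C$q$q) = 0"
      using X Cd by (simp add: diag_mult_left_entry diag_mult_right_entry
          matrix_mul_assoc[symmetric] algebra_simps)
        (simp add: diag_mult_left_entry diag_mult_right_entry X Cd matrix_mul_assoc algebra_simps)
    then show ?thesis using C False by (simp add: is_diag_reg_def)
  qed simp
  then show ?thesis using commute_diag_iff_entries[OF X] by blast
qed

section \<open>Matrix power series\<close>

text \<open>Power series in z with matrix coefficients are coefficient sequences; the product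
is the Cauchy product (the matrix type carries the entrywise product, so formal power
series over it do not apply).\<close>

definition ser_mult :: "(nat \<Rightarrow> 'n::finite cmat) \<Rightarrow> (nat \<Rightarrow> 'n cmat) \<Rightarrow> nat \<Rightarrow> 'n cmat"
    (infixl "\<star>" 70)
  where "(f \<star> g) n = (\<Sum>i=0..n. f i ** g (n - i))"

definition ser_monom :: "nat \<Rightarrow> 'n::finite cmat \<Rightarrow> nat \<Rightarrow> 'n cmat"
  where "ser_monom i A n = (if n = i then A else 0)"

abbreviation ser_const :: "'n::finite cmat \<Rightarrow> nat \<Rightarrow> 'n cmat"
  where "ser_const A \<equiv> ser_monom 0 A"

abbreviation ser_one :: "nat \<Rightarrow> 'n::finite cmat"
  where "ser_one \<equiv> ser_const (mat 1)"

definition ser_scale :: "complex \<Rightarrow> (nat \<Rightarrow> 'n::finite cmat) \<Rightarrow> nat \<Rightarrow> 'n cmat"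
  where "ser_scale c f n = cscale c (f n)"

lemma ser_mult_assoc: "(f \<star> g) \<star> h = f \<star> (g \<star> h)"
proof
  fix n
  have "(\<Sum>j=0..n. \<Sum>i=0..j. f i ** g (j - i) ** h (n - j)) =
          (\<Sum>j=0..n. \<Sum>i=0..n - j. f j ** g i ** h (n - j - i))"
    by (rule fps_mult_assoc_lemma)
  then show "((f \<star> g) \<star> h) n = (f \<star> (g \<star> h)) n"
    by (simp add: ser_mult_def matrix_sum_left matrix_sum_right matrix_mul_assoc)
qed

lemma ser_mult_add_left: "(f + g) \<star> h = f \<star> h + g \<star> h"
  by (rule ext) (simp add: ser_mult_def matrix_add_rdistrib sum.distrib)

lemma ser_mult_add_right: "h \<star> (f + g) = h \<star> f + h \<star> g"
  by (rule ext) (simp add: ser_mult_def matrix_add_ldistrib sum.distrib)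

lemma ser_mult_diff_left: "(f - g) \<star> h = f \<star> h - g \<star> h"
  by (rule ext) (simp add: ser_mult_def matrix_diff_rdistrib sum_subtractf)

lemma ser_mult_diff_right: "h \<star> (f - g) = h \<star> f - h \<star> g"
  by (rule ext) (simp add: ser_mult_def matrix_diff_ldistrib sum_subtractf)

lemma ser_mult_zero_left: "0 \<star> h = 0"
  by (rule ext) (simp add: ser_mult_def)

lemma ser_mult_zero_right: "h \<star> 0 = 0"
  by (rule ext) (simp add: ser_mult_def)

lemma ser_mult_scale_left: "ser_scale c f \<star> g = ser_scale c (f \<star> g)"
  by (rule ext) (simp add: ser_mult_def ser_scale_def cscale_mult_left cscale_sum)

lemma ser_mult_scale_right: "f \<star> ser_scale c g = ser_scale c (f \<star> g)"
  by (rule ext) (simp add: ser_mult_def ser_scale_def cscale_mult_right cscale_sum)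

lemma ser_scale_diff: "ser_scale c (f - g) = ser_scale c f - ser_scale c g"
  by (rule ext) (simp add: ser_scale_def cscale_diff)

lemma ser_mult_monom_right: "(f \<star> ser_monom i M) n = (if i \<le> n then f (n - i) ** M else 0)"
proof -
  have "(f \<star> ser_monom i M) n = (\<Sum>a=0..n. if a = n - i \<and> i \<le> n then f a ** M else 0)"
    unfolding ser_mult_def ser_monom_def by (rule sum.cong) auto
  then show ?thesis by (simp add: sum.delta')
qed

lemma ser_mult_monom_left: "(ser_monom i M \<star> f) n = (if i \<le> n then M ** f (n - i) else 0)"
  unfolding ser_mult_def ser_monom_def
  by (simp add: if_distrib if_distribR sum.delta cong: if_cong)

lemma ser_monom_mult: "ser_monom i A \<star> ser_monom j B = ser_monom (i + j) (A ** B)"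
  by (rule ext) (auto simp: ser_mult_monom_right ser_monom_def)

lemma ser_one_mult: "ser_one \<star> h = h"
  by (rule ext) (simp add: ser_mult_monom_left)

lemma ser_mult_one: "h \<star> ser_one = h"
  by (rule ext) (simp add: ser_mult_monom_right)

lemma ser_monom_zero: "ser_monom i 0 = 0"
  by (rule ext) (simp add: ser_monom_def)

lemma ser_monom_add: "ser_monom i (M + N) = ser_monom i M + ser_monom i N"
  by (rule ext) (simp add: ser_monom_def)

lemma ser_monom_diff: "ser_monom i (M - N) = ser_monom i M - ser_monom i N"
  by (rule ext) (simp add: ser_monom_def)

lemma ser_monom_cscale: "ser_monom i (cscale c M) = ser_scale c (ser_monom i M)"
  by (rule ext) (simp add: ser_monom_def ser_scale_def cscale_zero)

lemma sum_ser_apply: "(\<Sum>i\<in>S. f i) (n::nat) = (\<Sum>i\<in>S. f i n :: 'n::finite cmat)"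
  by (induction S rule: infinite_finite_induct) auto

definition agree_below :: "nat \<Rightarrow> (nat \<Rightarrow> 'n::finite cmat) \<Rightarrow> (nat \<Rightarrow> 'n cmat) \<Rightarrow> bool"
  where "agree_below k f g \<longleftrightarrow> (\<forall>n<k. f n = g n)"

definition vanishes_below :: "nat \<Rightarrow> (nat \<Rightarrow> 'n::finite cmat) \<Rightarrow> bool"
  where "vanishes_below r f \<longleftrightarrow> (\<forall>n<r. f n = 0)"

lemma agree_below_refl: "agree_below k f f"
  by (simp add: agree_below_def)

lemma agree_below_sym: "agree_below k f g \<Longrightarrow> agree_below k g f"
  by (simp add: agree_below_def)

lemma agree_below_trans: "agree_below k f g \<Longrightarrow> agree_below k g h \<Longrightarrow> agree_below k f h"
  by (simp add: agree_below_def)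

lemma agree_below_mult:
  assumes "agree_below k f f'" "agree_below k g g'"
  shows "agree_below k (f \<star> g) (f' \<star> g')"
  unfolding agree_below_def ser_mult_def
proof (intro allI impI)
  fix n assume "n < k"
  then show "(\<Sum>i = 0..n. f i ** g (n - i)) = (\<Sum>i = 0..n. f' i ** g' (n - i))"
    using assms by (intro sum.cong) (auto simp: agree_below_def)
qed

lemma agree_below_add_vanishing:
  "vanishes_below k g \<Longrightarrow> agree_below k (f + g) f"
  "vanishes_below k g \<Longrightarrow> agree_below k (f - g) f"
  by (simp_all add: agree_below_def vanishes_below_def)

lemma vanishes_below_mult:
  assumes "vanishes_below a f" "vanishes_below b g"
  shows "vanishes_below (a + b) (f \<star> g)"
  unfolding vanishes_below_def ser_mult_def
proof (intro allI impI)
  fix n assume n: "n < a + b"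
  have "f i ** g (n - i) = 0" if "i \<in> {0..n}" for i
  proof -
    have "i < a \<or> n - i < b" using n that by auto
    then show ?thesis using assms by (auto simp: vanishes_below_def)
  qed
  then show "(\<Sum>i = 0..n. f i ** g (n - i)) = 0" by simp
qed

lemma vanishes_below_0: "vanishes_below 0 f"
  by (simp add: vanishes_below_def)

lemma vanishes_below_mono: "vanishes_below a f \<Longrightarrow> b \<le> a \<Longrightarrow> vanishes_below b f"
  by (simp add: vanishes_below_def)

lemma vanishes_below_monom: "vanishes_below q (ser_monom q B)"
  by (simp add: vanishes_below_def ser_monom_def)

lemma bser_tinv: "bser k b \<star> tinv k b = ser_one"
proof
  fix n show "(bser k b \<star> tinv k b) n = ser_one n"
  proof (cases n)
    case (Suc j)
    have "(bser k b \<star> tinv k b) n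
        = bser k b 0 ** tinv k b (Suc j) + (\<Sum>i\<in>{1..Suc j}. bser k b i ** tinv k b (Suc j - i))"
      unfolding ser_mult_def Suc by (simp add: sum.atLeast_Suc_atMost)
    also have "\<dots> = 0" by (simp add: bser_def)
    finally show ?thesis by (simp add: ser_monom_def Suc)
  qed (simp add: ser_mult_def bser_def ser_monom_def)
qed

function ser_linv :: "(nat \<Rightarrow> 'n::finite cmat) \<Rightarrow> nat \<Rightarrow> 'n cmat" where
  "ser_linv f 0 = mat 1"
| "ser_linv f (Suc j) = - (\<Sum>i\<in>{0..j}. ser_linv f i ** f (Suc j - i))"
  by pat_completeness auto
termination
  by (relation "Wellfounded.measure (\<lambda>(f, j). j)") auto

lemma ser_linv_mult: assumes "f 0 = mat 1" shows "ser_linv f \<star> f = ser_one"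
proof
  fix n show "(ser_linv f \<star> f) n = ser_one n"
  proof (cases n)
    case (Suc j)
    have "(ser_linv f \<star> f) n = ser_linv f (Suc j) ** f 0 + (\<Sum>i\<in>{0..j}. ser_linv f i ** f (Suc j - i))"
      unfolding ser_mult_def Suc by (simp add: sum.atLeast0_atMost_Suc add.commute)
    also have "\<dots> = 0" using assms by simp
    finally show ?thesis by (simp add: ser_monom_def Suc)
  qed (use assms in \<open>simp add: ser_mult_def ser_monom_def\<close>)
qed

lemma tinv_bser: "tinv k b \<star> bser k b = ser_one"
proof -
  let ?g = "ser_linv (bser k b)"
  have g: "?g \<star> bser k b = ser_one" by (rule ser_linv_mult) (simp add: bser_def)
  have "?g = ?g \<star> (bser k b \<star> tinv k b)" by (simp add: bser_tinv ser_mult_one)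
  also have "\<dots> = tinv k b" by (simp add: ser_mult_assoc[symmetric] g ser_one_mult)
  finally show ?thesis using g by simp
qed

lemma inverse_unique_below:
  assumes "t \<star> f = ser_one" "agree_below k (f \<star> s) ser_one"
  shows "agree_below k t s"
proof -
  have "s = t \<star> (f \<star> s)" by (simp add: ser_mult_assoc[symmetric] assms(1) ser_one_mult)
  moreover have "agree_below k (t \<star> (f \<star> s)) (t \<star> ser_one)"
    by (rule agree_below_mult[OF agree_below_refl assms(2)])
  ultimately show ?thesis by (simp add: ser_mult_one agree_below_sym)
qed

text \<open>If b = b0 + d with d of order at least q, then b (t - t d t + t d t d t) = 1 + (d t)^3 for t = b0^(-1),
which is 1 modulo z^(3q).\<close>

lemma tinv_perturb:
  assumes b: "bser k b = bser k b0 + d" and d: "vanishes_below q d" and k: "k \<le> 3 * q"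
  shows "agree_below k (tinv k b)
    (tinv k b0 - tinv k b0 \<star> d \<star> tinv k b0 + tinv k b0 \<star> d \<star> tinv k b0 \<star> d \<star> tinv k b0)"
    (is "agree_below k _ ?s")
proof (rule inverse_unique_below[OF tinv_bser])
  let ?t = "tinv k b0"
  have "bser k b \<star> ?s = ser_one + d \<star> ?t \<star> d \<star> ?t \<star> d \<star> ?t"
    unfolding b
    by (simp add: ser_mult_add_left ser_mult_add_right ser_mult_diff_right ser_mult_assoc[symmetric]
        bser_tinv ser_one_mult)
  moreover have "vanishes_below k (d \<star> ?t \<star> d \<star> ?t \<star> d \<star> ?t)"
  proof -
    have "vanishes_below (q + 0 + q + 0 + q + 0) (d \<star> ?t \<star> d \<star> ?t \<star> d \<star> ?t)"
      by (intro vanishes_below_mult d vanishes_below_0)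
    then show ?thesis by (rule vanishes_below_mono) (use k in simp)
  qed
  ultimately show "agree_below k (bser k b \<star> ?s) ser_one"
    using agree_below_add_vanishing(1) by metis
qed

section \<open>The function phi as a residue pairing\<close>

definition res_pair :: "nat \<Rightarrow> (nat \<Rightarrow> 'n::finite cmat) \<Rightarrow> (nat \<Rightarrow> 'n cmat) \<Rightarrow> complex"
  where "res_pair k C W = (\<Sum>l=1..k. trace (C l ** W (l - 1)))"

definition inv_conj :: "nat \<Rightarrow> (nat \<Rightarrow> 'n::finite cmat) \<Rightarrow> 'n cmat \<Rightarrow> nat \<Rightarrow> 'n cmat"
  where "inv_conj k b X = tinv k b \<star> (ser_const X \<star> bser k b)"

lemma res_pair_agree_below: "agree_below k W W' \<Longrightarrow> res_pair k C W = res_pair k C W'"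
  unfolding res_pair_def agree_below_def by (intro sum.cong) auto

lemma res_pair_add: "res_pair k C (W + W') = res_pair k C W + res_pair k C W'"
  unfolding res_pair_def by (simp add: matrix_add_ldistrib trace_add sum.distrib)

lemma res_pair_zero: "res_pair k C 0 = 0"
  unfolding res_pair_def by (simp add: trace_zero)

lemma res_pair_scale: "res_pair k C (ser_scale c W) = c * res_pair k C W"
  by (simp add: res_pair_def ser_scale_def cscale_mult_right trace_cscale sum_distrib_left)

lemma res_pair_vanishing: "vanishes_below k W \<Longrightarrow> res_pair k C W = 0"
  unfolding res_pair_def vanishes_below_def by (intro sum.neutral) (auto simp: trace_zero)

lemma res_pair_split_top:
  "k \<ge> 1 \<Longrightarrow> res_pair k C W = (\<Sum>l=1..k-1. trace (C l ** W (l - 1))) + trace (C k ** W (k - 1))"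
  unfolding res_pair_def by (cases k) (simp_all add: sum.cl_ivl_Suc)

lemma res_pair_const: "k \<ge> 1 \<Longrightarrow> res_pair k C (ser_const X) = trace (C 1 ** X)"
proof -
  assume k: "k \<ge> 1"
  have "res_pair k C (ser_const X) = (\<Sum>l=1..k. if l = 1 then trace (C 1 ** X) else 0)"
    unfolding res_pair_def by (rule sum.cong) (auto simp: ser_monom_def trace_zero)
  then show ?thesis using k by simp
qed

lemma sum_diagonal_strip:
  fixes g :: "nat \<Rightarrow> nat \<Rightarrow> complex"
  assumes "1 \<le> l" "l \<le> k"
  shows "(\<Sum>i<k. \<Sum>j<k. if i + j + 1 = l then g i j else 0) = (\<Sum>j=0..l-1. g (l - 1 - j) j)"
proof -
  have "(\<Sum>i<k. \<Sum>j<k. if i + j + 1 = l then g i j else 0)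
      = (\<Sum>j<k. \<Sum>i<k. if i + j + 1 = l then g i j else 0)"
    by (rule sum.swap)
  also have "\<dots> = (\<Sum>j<k. if j < l then g (l - 1 - j) j else 0)"
  proof (rule sum.cong[OF refl])
    fix j
    have "(\<Sum>i<k. if i + j + 1 = l then g i j else 0) = (\<Sum>i<k. if i = l - 1 - j \<and> j < l then g i j else 0)"
      by (rule sum.cong) auto
    also have "\<dots> = (if j < l then g (l - 1 - j) j else 0)"
      using assms by (auto simp: sum.delta')
    finally show "(\<Sum>i<k. if i + j + 1 = l then g i j else 0) = (if j < l then g (l - 1 - j) j else 0)" .
  qed
  also have "\<dots> = (\<Sum>j\<in>{..<k} \<inter> {j. j < l}. g (l - 1 - j) j)"
    by (subst sum.inter_restrict[OF finite_lessThan]) (simp only: mem_Collect_eq)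
  also have "{..<k} \<inter> {j. j < l} = {0..l-1}" using assms by auto
  finally show ?thesis .
qed

text \<open>Only the z^(-1) coefficient of b C b^(-1) pairs with the constant X, and by cyclicity
of the trace tr((b C b^(-1))_1 X) = sum_l tr(C_l (b^(-1) X b)_(l-1)).\<close>

lemma phi_eq_res_pair:
  assumes "k \<ge> 1"
  shows "phi k C X b = res_pair k C (inv_conj k b X)"
proof -
  let ?t = "tinv k b" and ?\<beta> = "bser k b"
  have "phi k C X b = (\<Sum>i\<in>{1..k}. if i = 1 then trace (coadj k b C 1 ** X) else 0)"
    unfolding phi_def pairing_def by (rule sum.cong) (auto simp: const_gk_def trace_zero)
  also have "\<dots> = trace (coadj k b C 1 ** X)" using assms by (simp add: sum.delta)
  also have "\<dots> = (\<Sum>l\<in>{1..k}. \<Sum>i<k. \<Sum>j<k.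
      if i + j + 1 = l then trace (?\<beta> i ** C l ** ?t j ** X) else 0)"
    unfolding coadj_def
    by (simp add: matrix_sum_left trace_sum if_distrib if_distribR trace_zero cong: if_cong)
  also have "\<dots> = (\<Sum>l\<in>{1..k}. \<Sum>j=0..l-1. trace (?\<beta> (l - 1 - j) ** C l ** ?t j ** X))"
    by (intro sum.cong refl sum_diagonal_strip) auto
  also have "\<dots> = (\<Sum>l\<in>{1..k}. \<Sum>j=0..l-1. trace (C l ** (?t j ** (X ** ?\<beta> (l - 1 - j)))))"
    by (intro sum.cong refl) (metis trace_mult_cycle3 matrix_mul_assoc)
  also have "\<dots> = res_pair k C (inv_conj k b X)"
    unfolding res_pair_def inv_conj_def ser_mult_def[of ?t]
    by (simp add: ser_mult_monom_left matrix_sum_right trace_sum)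
  finally show ?thesis .
qed

section \<open>Affine dependence on the high coefficients\<close>

text \<open>The differential of b \<mapsto> b^(-1) X b at b0 in the direction d.\<close>

definition deriv_ser :: "nat \<Rightarrow> (nat \<Rightarrow> 'n::finite cmat) \<Rightarrow> 'n cmat \<Rightarrow> (nat \<Rightarrow> 'n cmat) \<Rightarrow> nat \<Rightarrow> 'n cmat"
  where "deriv_ser k b0 X d = tinv k b0 \<star> (ser_const X \<star> d) - tinv k b0 \<star> d \<star> inv_conj k b0 X"

definition phi_deriv :: "nat \<Rightarrow> (nat \<Rightarrow> 'n::finite cmat) \<Rightarrow> 'n cmat \<Rightarrow> (nat \<Rightarrow> 'n cmat) \<Rightarrow> (nat \<Rightarrow> 'n cmat) \<Rightarrow> complex"
  where "phi_deriv k C X b0 d = res_pair k C (deriv_ser k b0 X d)"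

lemma phi_deriv_add: "phi_deriv k C X b0 (d + e) = phi_deriv k C X b0 d + phi_deriv k C X b0 e"
  unfolding phi_deriv_def deriv_ser_def
  by (simp add: ser_mult_add_left ser_mult_add_right res_pair_add[symmetric] algebra_simps)

lemma phi_deriv_zero: "phi_deriv k C X b0 0 = 0"
  unfolding phi_deriv_def deriv_ser_def by (simp add: ser_mult_zero_left ser_mult_zero_right res_pair_zero)

lemma phi_deriv_scale: "phi_deriv k C X b0 (ser_scale c d) = c * phi_deriv k C X b0 d"
  unfolding phi_deriv_def deriv_ser_def
  by (simp add: ser_mult_scale_left ser_mult_scale_right ser_scale_diff[symmetric] res_pair_scale)

lemma phi_deriv_sum: "phi_deriv k C X b0 (\<Sum>i\<in>S. f i) = (\<Sum>i\<in>S. phi_deriv k C X b0 (f i))"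
proof (induction S rule: infinite_finite_induct)
  case (infinite S)
  then show ?case by (simp only: sum.infinite[OF infinite] phi_deriv_zero)
next
  case (insert x F)
  then show ?case by (simp only: sum.insert[OF insert(1,2)] phi_deriv_add insert(3))
qed (simp only: sum.empty phi_deriv_zero)

lemma clinear_phi_deriv_monom: "clinear_fun (\<lambda>M. phi_deriv k C X b0 (ser_monom i M))"
  unfolding clinear_fun_def
  by (simp add: ser_monom_add phi_deriv_add ser_monom_cscale phi_deriv_scale)

definition low_coeffs :: "nat \<Rightarrow> (nat \<Rightarrow> 'n::finite cmat) \<Rightarrow> nat \<Rightarrow> 'n cmat"
  where "low_coeffs m b i = (if 1 \<le> i \<and> i < m then b i else 0)"

lemma low_coeffs_cong: "(\<forall>i. 1 \<le> i \<and> i < m \<longrightarrow> b' i = b i) \<Longrightarrow> low_coeffs m b' = low_coeffs m b"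
  by (auto simp: low_coeffs_def fun_eq_iff)


lemma phi_decomp:
  assumes k: "k \<ge> 1" and m: "k \<le> 2 * m" "1 \<le> m"
  shows "phi k C X b = phi k C X (low_coeffs m b)
      + (\<Sum>i\<in>{m..<k}. phi_deriv k C X (low_coeffs m b) (ser_monom i (b i)))"
proof -
  let ?b0 = "low_coeffs m b"
  let ?t = "tinv k ?b0" and ?V = "inv_conj k ?b0 X"
  define d where "d = (\<Sum>i\<in>{m..<k}. ser_monom i (b i))"
  have d_apply: "d n = (if m \<le> n \<and> n < k then b n else 0)" for n
    unfolding d_def sum_ser_apply by (simp add: ser_monom_def sum.delta)
  have bser_eq: "bser k b = bser k ?b0 + d"
    using m by (auto simp: fun_eq_iff d_apply bser_def low_coeffs_def)
  have d_order: "vanishes_below m d" unfolding vanishes_below_def d_apply by auto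
  have order: "vanishes_below k (f \<star> d \<star> g \<star> d \<star> h)" for f g h
  proof -
    have "vanishes_below (0 + m + 0 + m + 0) (f \<star> d \<star> g \<star> d \<star> h)"
      by (intro vanishes_below_mult d_order vanishes_below_0)
    then show ?thesis by (rule vanishes_below_mono) (use m in simp)
  qed
  define s where "s = ?t - ?t \<star> d \<star> ?t"
  have "agree_below k (tinv k b) (s + ?t \<star> d \<star> ?t \<star> d \<star> ?t)"
    unfolding s_def by (rule tinv_perturb[OF bser_eq d_order]) (use m in simp)
  then have inv: "agree_below k (tinv k b) s"
    using agree_below_trans agree_below_add_vanishing(1)[OF order] by blast
  have "phi k C X b = res_pair k C (s \<star> (ser_const X \<star> bser k b))"
    unfolding phi_eq_res_pair[OF k] inv_conj_def
    by (rule res_pair_agree_below, rule agree_below_mult[OF inv agree_below_refl])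
  also have "s \<star> (ser_const X \<star> bser k b) = ?V + deriv_ser k ?b0 X d
       - ?t \<star> d \<star> (?t \<star> ser_const X) \<star> d \<star> ser_one"
    unfolding s_def bser_eq inv_conj_def deriv_ser_def
    by (simp add: ser_mult_add_left ser_mult_add_right ser_mult_diff_left ser_mult_diff_right
        ser_mult_assoc ser_mult_one algebra_simps)
  also have "res_pair k C \<dots> = res_pair k C (?V + deriv_ser k ?b0 X d)"
    by (rule res_pair_agree_below, rule agree_below_add_vanishing(2), rule order)
  also have "\<dots> = phi k C X ?b0 + phi_deriv k C X ?b0 d"
    by (simp add: res_pair_add phi_deriv_def phi_eq_res_pair[OF k])
  finally show ?thesis by (simp add: d_def phi_deriv_sum)
qed

section \<open>The linear part\<close>

definition commutes_upto :: "nat \<Rightarrow> (nat \<Rightarrow> 'n::finite cmat) \<Rightarrow> 'n cmat \<Rightarrow> nat \<Rightarrow> bool"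
  where "commutes_upto k b X r \<longleftrightarrow> (\<forall>s. 1 \<le> s \<and> s \<le> r \<longrightarrow> bser k b s ** X = X ** bser k b s)"

lemma commutes_upto_bser: "commutes_upto k b X r \<Longrightarrow> s \<le> r \<Longrightarrow> bser k b s ** X = X ** bser k b s"
  by (cases "s = 0") (auto simp: commutes_upto_def bser_def)

lemma commutes_upto_0: "commutes_upto k b X 0"
  by (simp add: commutes_upto_def)

lemma commutes_upto_low_coeffs_iff:
  assumes "r < m" "m \<le> k"
  shows "commutes_upto k (low_coeffs m b) X r \<longleftrightarrow> (\<forall>i. 1 \<le> i \<and> i \<le> r \<longrightarrow> b i ** X = X ** b i)"
  using assms by (auto simp: commutes_upto_def bser_def low_coeffs_def)

lemma tinv_commute:
  assumes "commutes_upto k b X r" "s \<le> r"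
  shows "tinv k b s ** X = X ** tinv k b s"
  using assms(2)
proof (induction s rule: less_induct)
  case (less s)
  show ?case
  proof (cases s)
    case (Suc j)
    have "(\<Sum>i\<in>{1..Suc j}. bser k b i ** tinv k b (Suc j - i)) ** X
        = X ** (\<Sum>i\<in>{1..Suc j}. bser k b i ** tinv k b (Suc j - i))"
      by (intro commute_sum commute_mult commutes_upto_bser[OF assms(1)] less.IH)
        (use less.prems Suc in auto)
    then show ?thesis unfolding Suc tinv.simps by (rule commute_neg)
  qed simp
qed

text \<open>Where b commutes with X, b^(-1) X b = X; at the first non-commuting coefficient the
commutator [X, b_r] appears.\<close>

lemma inv_conj_coeff:
  assumes "commutes_upto k b X r" "s \<le> r"
  shows "inv_conj k b X s = ser_const X s"
proof -
  have "inv_conj k b X s = (\<Sum>a=0..s. tinv k b a ** (X ** bser k b (s - a)))"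
    unfolding inv_conj_def ser_mult_def[of "tinv k b"] by (simp add: ser_mult_monom_left)
  also have "\<dots> = (\<Sum>a=0..s. tinv k b a ** bser k b (s - a)) ** X"
    unfolding matrix_sum_left
    by (rule sum.cong[OF refl])
      (metis commutes_upto_bser[OF assms(1)] assms(2) diff_le_self le_trans matrix_mul_assoc)
  also have "\<dots> = ser_one s ** X"
    using fun_cong[OF tinv_bser[of k b], of s] by (simp add: ser_mult_def)
  finally show ?thesis by (simp add: ser_monom_def)
qed

lemma inv_conj_coeff_first:
  assumes "commutes_upto k b X (r - 1)" "r \<ge> 1"
  shows "inv_conj k b X r = X ** bser k b r - bser k b r ** X"
proof -
  let ?t = "tinv k b" and ?\<beta> = "bser k b"
  have sum_tail: "(\<Sum>a=1..r. ?t a ** ?\<beta> (r - a)) = - ?\<beta> r"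
  proof -
    have "?\<beta> r + (\<Sum>a=1..r. ?t a ** ?\<beta> (r - a)) = (\<Sum>a=0..r. ?t a ** ?\<beta> (r - a))"
      by (subst sum.atLeast_Suc_atMost) simp_all
    also have "\<dots> = 0"
      using tinv_bser[of k b] assms(2) by (simp add: ser_mult_def fun_eq_iff ser_monom_def)
    finally show ?thesis by (simp add: add_eq_0_iff)
  qed
  have "inv_conj k b X r = (\<Sum>a=0..r. ?t a ** (X ** ?\<beta> (r - a)))"
    unfolding inv_conj_def ser_mult_def[of "tinv k b"] by (simp add: ser_mult_monom_left)
  also have "\<dots> = X ** ?\<beta> r + (\<Sum>a=1..r. ?t a ** (X ** ?\<beta> (r - a)))"
    by (simp add: sum.atLeast_Suc_atMost)
  also have "(\<Sum>a=1..r. ?t a ** (X ** ?\<beta> (r - a))) = (\<Sum>a=1..r. ?t a ** ?\<beta> (r - a)) ** X"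
    unfolding matrix_sum_left
  proof (rule sum.cong[OF refl])
    fix a assume "a \<in> {1..r}"
    then have "r - a \<le> r - 1" by auto
    then show "?t a ** (X ** ?\<beta> (r - a)) = ?t a ** ?\<beta> (r - a) ** X"
      by (metis commutes_upto_bser[OF assms(1)] matrix_mul_assoc)
  qed
  finally show ?thesis unfolding sum_tail by (simp add: matrix_neg_left)
qed

lemma tinv_eq_neg_bser_plus_commuting:
  assumes "commutes_upto k b X (r - 1)" "r \<ge> 1"
  obtains R where "tinv k b r = - bser k b r + R" "R ** X = X ** R"
proof -
  obtain j where r: "r = Suc j" using assms(2) by (cases r) auto
  let ?R = "- (\<Sum>i\<in>{1..j}. bser k b i ** tinv k b (Suc j - i))"
  have "tinv k b r = - (bser k b (Suc j) ** tinv k b 0 + (\<Sum>i\<in>{1..j}. bser k b i ** tinv k b (Suc j - i)))"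
    unfolding r tinv.simps by (simp add: sum.atLeast_Suc_atMost add.commute)
  then have "tinv k b r = - bser k b r + ?R" using r by simp
  moreover have "?R ** X = X ** ?R"
    by (intro commute_neg commute_sum commute_mult commutes_upto_bser[OF assms(1)]
        tinv_commute[OF assms(1)]) (use r in auto)
  ultimately show ?thesis using that by blast
qed

lemma deriv_ser_monom_below:
  assumes "n < i"
  shows "deriv_ser k b X (ser_monom i M) n = 0"
proof -
  have "(tinv k b \<star> ser_monom i M \<star> inv_conj k b X) n = 0"
    unfolding ser_mult_def[of "tinv k b \<star> ser_monom i M"] ser_mult_monom_right using assms by simp
  moreover have "(tinv k b \<star> (ser_const X \<star> ser_monom i M)) n = 0"
    unfolding ser_monom_mult ser_mult_monom_right using assms by simp
  ultimately show ?thesis by (simp add: deriv_ser_def)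
qed

lemma deriv_ser_monom_coeff:
  assumes "i \<le> n"
  shows "deriv_ser k b X (ser_monom i M) n = tinv k b (n - i) ** (X ** M)
    - (\<Sum>a=0..n-i. tinv k b a ** M ** inv_conj k b X (n - i - a))"
proof -
  let ?t = "tinv k b" and ?V = "inv_conj k b X"
  have "(?t \<star> ser_monom i M \<star> ?V) n = (\<Sum>a=0..n. if a \<le> n - i then ?t a ** (M ** ?V (n - i - a)) else 0)"
    unfolding ser_mult_assoc ser_mult_def[of ?t] ser_mult_monom_left
    by (intro sum.cong) (use assms in \<open>auto simp: diff_diff_add add.commute\<close>)
  also have "\<dots> = (\<Sum>a=0..n-i. ?t a ** M ** ?V (n - i - a))"
    by (rule sum.mono_neutral_cong_right) (auto simp: matrix_mul_assoc)
  finally show ?thesis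
    using assms by (simp add: deriv_ser_def ser_monom_mult ser_mult_monom_right)
qed

lemma trace_deriv_ser_monom_eq_0:
  assumes b: "commutes_upto k b X r" and X: "is_diag X" and D: "is_diag D"
    and n: "i \<le> n" "n - i \<le> r"
  shows "trace (D ** deriv_ser k b X (ser_monom i M) n) = 0"
proof -
  let ?t = "tinv k b" and ?V = "inv_conj k b X"
  have "(\<Sum>a=0..n-i. ?t a ** M ** ?V (n - i - a)) = (\<Sum>a=0..n-i. if a = n - i then ?t a ** M ** X else 0)"
    by (rule sum.cong[OF refl]) (use inv_conj_coeff[OF b] n in \<open>auto simp: ser_monom_def\<close>)
  then have "deriv_ser k b X (ser_monom i M) n = ?t (n - i) ** (X ** M - M ** X)"
    unfolding deriv_ser_monom_coeff[OF n(1)] by (simp add: matrix_diff_ldistrib matrix_mul_assoc)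
  then have "trace (D ** deriv_ser k b X (ser_monom i M) n) = trace ((D ** ?t (n - i)) ** (X ** M - M ** X))"
    by (simp add: matrix_mul_assoc)
  also have "\<dots> = 0"
    by (intro trace_mult_commutator_eq_0 commute_mult diag_commute[OF D X] tinv_commute[OF b])
      (use n in auto)
  finally show ?thesis .
qed

lemma trace_deriv_ser_monom_first:
  assumes b: "commutes_upto k b X (r - 1)" and r: "r \<ge> 1" and X: "is_diag X" and D: "is_diag D"
  shows "trace (D ** deriv_ser k b X (ser_monom i M) (i + r))
     = - trace (D ** bser k b r ** (X ** M - M ** X)) - trace (D ** M ** (X ** bser k b r - bser k b r ** X))"
proof -
  let ?t = "tinv k b" and ?V = "inv_conj k b X" and ?\<beta> = "bser k b r"
  obtain R where R: "?t r = - ?\<beta> + R" "R ** X = X ** R"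
    using tinv_eq_neg_bser_plus_commuting[OF b r] by blast
  have "(\<Sum>a=0..r. ?t a ** M ** ?V (r - a)) = (\<Sum>a\<in>{0, r}. ?t a ** M ** ?V (r - a))"
  proof (rule sum.mono_neutral_right)
    show "\<forall>a\<in>{0..r} - {0, r}. ?t a ** M ** ?V (r - a) = 0"
    proof
      fix a assume "a \<in> {0..r} - {0, r}"
      then have "r - a \<le> r - 1" "r - a \<noteq> 0" by auto
      then show "?t a ** M ** ?V (r - a) = 0" using inv_conj_coeff[OF b] by (simp add: ser_monom_def)
    qed
  qed auto
  also have "\<dots> = M ** ?V r + ?t r ** M ** X"
    using r inv_conj_coeff[OF b, of 0] by (simp add: ser_monom_def)
  finally have "deriv_ser k b X (ser_monom i M) (i + r) = ?t r ** (X ** M) - (M ** ?V r + ?t r ** M ** X)"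
    using deriv_ser_monom_coeff[of i "i + r" k b X M] by simp
  also have "\<dots> = (- ?\<beta>) ** (X ** M - M ** X) + R ** (X ** M - M ** X) - M ** (X ** ?\<beta> - ?\<beta> ** X)"
    unfolding R(1) inv_conj_coeff_first[OF b r]
    by (simp add: matrix_diff_ldistrib matrix_diff_rdistrib matrix_add_rdistrib matrix_neg_left
        matrix_add_ldistrib matrix_mul_assoc algebra_simps)
  finally have W: "deriv_ser k b X (ser_monom i M) (i + r) = \<dots>" .
  have "trace (D ** (R ** (X ** M - M ** X))) = 0"
    by (subst matrix_mul_assoc, intro trace_mult_commutator_eq_0 commute_mult diag_commute[OF D X] R(2))
  then have "trace (D ** R ** X ** M) = trace (D ** R ** M ** X)"
    by (simp add: matrix_diff_ldistrib trace_sub matrix_mul_assoc)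
  then show ?thesis unfolding W
    by (simp add: matrix_add_ldistrib matrix_diff_ldistrib trace_add trace_sub matrix_neg_right
        matrix_neg_left trace_neg matrix_mul_assoc)
qed

lemma phi_deriv_monom_eq_0:
  assumes X: "is_diag X" and C: "\<forall>l. 1 \<le> l \<and> l \<le> k \<longrightarrow> is_diag (C l)"
    and b: "commutes_upto k b X (k - 1 - m)" and i: "m \<le> i" "i < k"
  shows "phi_deriv k C X b (ser_monom i M) = 0"
  unfolding phi_deriv_def res_pair_def
proof (intro sum.neutral ballI)
  fix l assume l: "l \<in> {1..k}"
  show "trace (C l ** deriv_ser k b X (ser_monom i M) (l - 1)) = 0"
  proof (cases "l - 1 < i")
    case True then show ?thesis by (simp add: deriv_ser_monom_below trace_zero)
  next
    case False
    show ?thesis by (rule trace_deriv_ser_monom_eq_0[OF b X]) (use C l False i in auto)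
  qed
qed

lemma phi_deriv_monom_top:
  assumes "k \<ge> 1"
  shows "phi_deriv k C X b (ser_monom (k - 1) M) = trace (C k ** (X ** M - M ** X))"
proof -
  have "(\<Sum>l=1..k-1. trace (C l ** deriv_ser k b X (ser_monom (k - 1) M) (l - 1))) = 0"
    by (intro sum.neutral ballI) (auto simp: deriv_ser_monom_below trace_zero)
  moreover have "deriv_ser k b X (ser_monom (k - 1) M) (k - 1) = X ** M - M ** X"
    using deriv_ser_monom_coeff[of "k - 1" "k - 1" k b X M]
    by (simp add: inv_conj_coeff[OF commutes_upto_0 order_refl] ser_monom_def)
  ultimately show ?thesis unfolding phi_deriv_def res_pair_split_top[OF assms] by simp
qed

lemma phi_deriv_monom_shift:
  assumes k: "r + 1 \<le> k" and r: "r \<ge> 1" and b: "commutes_upto k b X (r - 1)" and X: "is_diag X"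
    and C: "\<forall>l. 1 \<le> l \<and> l \<le> k \<longrightarrow> is_diag (C l)"
  shows "phi_deriv k C X b (ser_monom (k - 1 - r) M)
    = - trace (C k ** bser k b r ** (X ** M - M ** X)) - trace (C k ** M ** (X ** bser k b r - bser k b r ** X))"
proof -
  let ?W = "deriv_ser k b X (ser_monom (k - 1 - r) M)"
  have "(\<Sum>l=1..k-1. trace (C l ** ?W (l - 1))) = 0"
  proof (intro sum.neutral ballI)
    fix l assume l: "l \<in> {1..k-1}"
    show "trace (C l ** ?W (l - 1)) = 0"
    proof (cases "l - 1 < k - 1 - r")
      case True then show ?thesis by (simp add: deriv_ser_monom_below trace_zero)
    next
      case False
      show ?thesis by (rule trace_deriv_ser_monom_eq_0[OF b X]) (use C l False k in auto)
    qed
  qed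
  moreover have "trace (C k ** ?W (k - 1)) = - trace (C k ** bser k b r ** (X ** M - M ** X))
      - trace (C k ** M ** (X ** bser k b r - bser k b r ** X))"
    using trace_deriv_ser_monom_first[OF b r X, of "C k" "k - 1 - r" M] C k by simp
  moreover have "k \<ge> 1" using k by simp
  ultimately show ?thesis unfolding phi_deriv_def by (simp add: res_pair_split_top)
qed

text \<open>Testing with the top monomial z^(k-1) M forces X to be diagonal, and then z^(k-1-r) M
forces [X, b_r] = 0, by induction on r.\<close>

lemma phi_deriv_monoms_vanish_iff:
  assumes m: "m < k" and C: "\<forall>l. 1 \<le> l \<and> l \<le> k \<longrightarrow> is_diag (C l)" and Ck: "is_diag_reg (C k)"
  shows "(\<forall>i M. m \<le> i \<and> i < k \<and> is_offdiag M \<longrightarrow> phi_deriv k C X b (ser_monom i M) = 0)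
      \<longleftrightarrow> is_diag X \<and> commutes_upto k b X (k - 1 - m)"
proof
  assume H: "\<forall>i M. m \<le> i \<and> i < k \<and> is_offdiag M \<longrightarrow> phi_deriv k C X b (ser_monom i M) = 0"
  have X: "is_diag X"
  proof (rule diag_if_trace_commutator_vanishes[OF Ck], intro allI impI)
    fix M :: "'a cmat" assume "is_offdiag M"
    then have "phi_deriv k C X b (ser_monom (k - 1) M) = 0" using H m by simp
    then show "trace (C k ** (X ** M - M ** X)) = 0" using phi_deriv_monom_top[of k C X b M] m by simp
  qed
  have "commutes_upto k b X r" if "r \<le> k - 1 - m" for r
    using that
  proof (induction r)
    case (Suc r)
    then have b: "commutes_upto k b X (Suc r - 1)" by simp
    have "bser k b (Suc r) ** X = X ** bser k b (Suc r)"
    proof (rule commute_if_trace_commutators_vanish[OF Ck X], intro allI impI)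
      fix M :: "'a cmat" assume "is_offdiag M"
      then have "phi_deriv k C X b (ser_monom (k - 1 - Suc r) M) = 0" using H Suc.prems m by auto
      then show "- trace (C k ** bser k b (Suc r) ** (X ** M - M ** X))
          - trace (C k ** M ** (X ** bser k b (Suc r) - bser k b (Suc r) ** X)) = 0"
        using phi_deriv_monom_shift[OF _ _ b X C] Suc.prems m by simp
    qed
    then show ?case using Suc by (auto simp: commutes_upto_def le_Suc_eq)
  qed (rule commutes_upto_0)
  then show "is_diag X \<and> commutes_upto k b X (k - 1 - m)" using X by simp
qed (use phi_deriv_monom_eq_0 C in blast)

section \<open>The middle coefficient for odd k\<close>

lemma inv_conj_perturb_expansion:
  assumes comm: "ser_const X \<star> \<beta> = \<beta> \<star> ser_const X" and inv: "t \<star> \<beta> = ser_one"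
  shows "(t - t \<star> d \<star> t + t \<star> d \<star> t \<star> d \<star> t) \<star> (ser_const X \<star> (\<beta> + d))
    = ser_const X + t \<star> (ser_const X \<star> d - d \<star> ser_const X)
      + t \<star> d \<star> t \<star> (d \<star> ser_const X - ser_const X \<star> d)
      + t \<star> d \<star> t \<star> d \<star> t \<star> (ser_const X \<star> d)"
proof -
  let ?s = "t - t \<star> d \<star> t + t \<star> d \<star> t \<star> d \<star> t"
  have s_\<beta>: "?s \<star> \<beta> = ser_one - t \<star> d + t \<star> d \<star> t \<star> d"
    by (simp add: ser_mult_add_left ser_mult_diff_left ser_mult_assoc inv ser_mult_one)
  have "?s \<star> (ser_const X \<star> (\<beta> + d)) = (?s \<star> \<beta>) \<star> ser_const X + ?s \<star> (ser_const X \<star> d)"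
    by (simp add: ser_mult_add_right comm ser_mult_assoc)
  also have "\<dots> = ser_const X + t \<star> (ser_const X \<star> d - d \<star> ser_const X)
      + t \<star> d \<star> t \<star> (d \<star> ser_const X - ser_const X \<star> d)
      + t \<star> d \<star> t \<star> d \<star> t \<star> (ser_const X \<star> d)"
    unfolding s_\<beta>
    by (simp add: ser_mult_add_left ser_mult_diff_left ser_mult_diff_right ser_one_mult
        ser_mult_assoc algebra_simps)
  finally show ?thesis .
qed

lemma res_pair_commuting_mult_commutator:
  assumes t: "\<And>s. t s ** X = X ** t s" and X: "is_diag X"
    and C: "\<forall>l. 1 \<le> l \<and> l \<le> k \<longrightarrow> is_diag (C l)"
  shows "res_pair k C (t \<star> ser_monom q (X ** B - B ** X)) = 0"
  unfolding res_pair_def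
proof (intro sum.neutral ballI)
  fix l assume l: "l \<in> {1..k}"
  have "trace (C l ** (t \<star> ser_monom q (X ** B - B ** X)) (l - 1))
      = (if q \<le> l - 1 then trace ((C l ** t (l - 1 - q)) ** (X ** B - B ** X)) else 0)"
    by (simp add: ser_mult_monom_right matrix_mul_assoc trace_zero)
  also have "\<dots> = 0"
    using l C by (simp add: trace_mult_commutator_eq_0 commute_mult diag_commute X t)
  finally show "trace (C l ** (t \<star> ser_monom q (X ** B - B ** X)) (l - 1)) = 0" .
qed

lemma res_pair_two_monoms:
  assumes k: "k = 2 * q + 1" and t: "t 0 = mat 1"
  shows "res_pair k C (t \<star> ser_monom q B \<star> t \<star> ser_monom q N) = trace (C k ** (B ** N))"
proof -
  let ?f = "t \<star> ser_monom q B \<star> t"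
  have "vanishes_below (0 + q + 0 + q) (?f \<star> ser_monom q N)"
    by (intro vanishes_below_mult vanishes_below_0 vanishes_below_monom)
  then have low: "(\<Sum>l=1..k-1. trace (C l ** (?f \<star> ser_monom q N) (l - 1))) = 0"
    using k by (intro sum.neutral) (auto simp: vanishes_below_def trace_zero)
  have "?f q = (\<Sum>c=0..q. (if q \<le> c then t (c - q) ** B else 0) ** t (q - c))"
    unfolding ser_mult_def[of "t \<star> ser_monom q B"] ser_mult_monom_right ..
  also have "\<dots> = (\<Sum>c=0..q. if c = q then B else 0)"
    by (rule sum.cong) (auto simp: t)
  finally have "(?f \<star> ser_monom q N) (k - 1) = B ** N"
    using k by (simp add: ser_mult_monom_right)
  then show ?thesis using low k by (simp add: res_pair_split_top)
qed

text \<open>Here b^(-1) is expanded to third order in b_q; the terms of order 3q vanish modulo z^k,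
the term linear in b_q is killed by the commuting coefficients, and only the top coefficient
C_k sees the quadratic term.\<close>

lemma phi_eq_middle_quadratic:
  assumes k: "k = 2 * q + 1" and q: "q \<ge> 1" and X: "is_diag X"
    and C: "\<forall>l. 1 \<le> l \<and> l \<le> k \<longrightarrow> is_diag (C l)"
    and comm: "\<forall>s. 1 \<le> s \<and> s < q \<longrightarrow> b s ** X = X ** b s" and high: "\<forall>s. q < s \<longrightarrow> b s = 0"
  shows "phi k C X b = trace (C 1 ** X) + trace (C k ** (b q ** (b q ** X - X ** b q)))"
proof -
  let ?b0 = "low_coeffs q b" and ?cX = "ser_const X"
  let ?t = "tinv k ?b0"
  define d where "d = ser_monom q (b q)"
  have k1: "k \<ge> 1" using k by simp
  have bser_eq: "bser k b = bser k ?b0 + d"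
    unfolding d_def using high k q by (auto simp: fun_eq_iff bser_def low_coeffs_def ser_monom_def)
  have b0_comm: "commutes_upto k ?b0 X r" for r
    unfolding commutes_upto_def using comm by (auto simp: bser_def low_coeffs_def)
  have cX_comm: "?cX \<star> bser k ?b0 = bser k ?b0 \<star> ?cX"
    by (rule ext) (simp add: ser_mult_monom_left ser_mult_monom_right
        commutes_upto_bser[OF b0_comm order_refl])
  have d_order: "vanishes_below q d" unfolding d_def by (rule vanishes_below_monom)
  have comm_d: "?cX \<star> d - d \<star> ?cX = ser_monom q (X ** b q - b q ** X)"
    "d \<star> ?cX - ?cX \<star> d = ser_monom q (b q ** X - X ** b q)"
    unfolding d_def ser_monom_mult ser_monom_diff by simp_all
  have "vanishes_below (0 + q + 0 + q + 0 + (0 + q)) (?t \<star> d \<star> ?t \<star> d \<star> ?t \<star> (?cX \<star> d))"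
    by (intro vanishes_below_mult d_order vanishes_below_0)
  then have "vanishes_below k (?t \<star> d \<star> ?t \<star> d \<star> ?t \<star> (?cX \<star> d))"
    by (rule vanishes_below_mono) (use k q in simp)
  then have cubic: "res_pair k C (?t \<star> d \<star> ?t \<star> d \<star> ?t \<star> (?cX \<star> d)) = 0"
    by (rule res_pair_vanishing)
  have quadratic: "res_pair k C (?t \<star> d \<star> ?t \<star> ser_monom q N) = trace (C k ** (b q ** N))" for N
    unfolding d_def by (rule res_pair_two_monoms[OF k]) simp
  have "phi k C X b = res_pair k C ((?t - ?t \<star> d \<star> ?t + ?t \<star> d \<star> ?t \<star> d \<star> ?t) \<star> (?cX \<star> bser k b))"
    unfolding phi_eq_res_pair[OF k1] inv_conj_def
    by (rule res_pair_agree_below,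
        rule agree_below_mult[OF tinv_perturb[OF bser_eq d_order] agree_below_refl]) (use k q in simp)
  also have "\<dots> = res_pair k C (?cX + ?t \<star> ser_monom q (X ** b q - b q ** X)
      + ?t \<star> d \<star> ?t \<star> ser_monom q (b q ** X - X ** b q)
      + ?t \<star> d \<star> ?t \<star> d \<star> ?t \<star> (?cX \<star> d))"
    unfolding bser_eq inv_conj_perturb_expansion[OF cX_comm tinv_bser] comm_d ..
  also have "\<dots> = trace (C 1 ** X) + trace (C k ** (b q ** (b q ** X - X ** b q)))"
    unfolding res_pair_add res_pair_const[OF k1] cubic quadratic
      res_pair_commuting_mult_commutator[OF tinv_commute[OF b0_comm order_refl] X C]
    by simp
  finally show ?thesis .
qed

lemma sum_pairs_lt:
  fixes g :: "'n::{finite,linorder} \<Rightarrow> 'n \<Rightarrow> complex"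
  assumes g: "\<And>p. g p p = 0"
  shows "(\<Sum>p\<in>UNIV. \<Sum>q\<in>UNIV. g p q) = (\<Sum>p\<in>UNIV. \<Sum>q\<in>UNIV. if q < p then g p q + g q p else 0)"
proof -
  have "(\<Sum>p\<in>UNIV. \<Sum>q\<in>UNIV. g p q)
      = (\<Sum>p\<in>UNIV. \<Sum>q\<in>UNIV. (if q < p then g p q else 0) + (if p < q then g p q else 0))"
    by (intro sum.cong refl) (use g in \<open>auto simp: not_less_iff_gr_or_eq\<close>)
  also have "\<dots> = (\<Sum>p\<in>UNIV. \<Sum>q\<in>UNIV. if q < p then g p q else 0)
      + (\<Sum>p\<in>UNIV. \<Sum>q\<in>UNIV. if p < q then g p q else 0)"
    by (simp add: sum.distrib)
  also have "(\<Sum>p\<in>UNIV. \<Sum>q\<in>UNIV. if p < q then g p q else 0)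
      = (\<Sum>p\<in>UNIV. \<Sum>q\<in>UNIV. if q < p then g q p else 0)"
    by (rule sum.swap)
  also have "(\<Sum>p\<in>UNIV. \<Sum>q\<in>UNIV. if q < p then g p q else 0)
      + (\<Sum>p\<in>UNIV. \<Sum>q\<in>UNIV. if q < p then g q p else 0)
      = (\<Sum>p\<in>UNIV. \<Sum>q\<in>UNIV. if q < p then g p q + g q p else 0)"
    by (simp add: sum.distrib[symmetric]) (intro sum.cong refl, auto)
  finally show ?thesis .
qed

definition lower_upper_form :: "'n::{finite,linorder} cmat \<Rightarrow> 'n cmat \<Rightarrow> 'n cmat \<Rightarrow> 'n cmat \<Rightarrow> complex"
  where "lower_upper_form D X bl bu = (\<Sum>p\<in>UNIV. \<Sum>q\<in>UNIV.
    if q < p then (D$p$p - D$q$q) * (X$p$p - X$q$q) * bl$p$q * bu$q$p else 0)"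

lemma trace_quadratic_eq_lower_upper_form:
  fixes D X bl bu :: "'n::{finite,linorder} cmat"
  assumes D: "is_diag D" and X: "is_diag X" and L: "strictly_lower bl" and U: "strictly_upper bu"
  shows "trace (D ** ((bl + bu) ** ((bl + bu) ** X - X ** (bl + bu)))) = lower_upper_form D X bl bu"
proof -
  let ?B = "bl + bu"
  let ?g = "\<lambda>p q. D$p$p * (X$p$p - X$q$q) * ?B$p$q * ?B$q$p"
  have "trace (D ** (?B ** (?B ** X - X ** ?B))) = (\<Sum>p\<in>UNIV. \<Sum>q\<in>UNIV. ?g p q)"
    unfolding trace_diag_mult[OF D]
    by (simp add: matrix_matrix_mult_def[of ?B "?B ** X - X ** ?B"] diag_mult_left_entry[OF X]
        diag_mult_right_entry[OF X] sum_distrib_left algebra_simps)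
  also have "\<dots> = (\<Sum>p\<in>UNIV. \<Sum>q\<in>UNIV. if q < p then ?g p q + ?g q p else 0)"
    by (rule sum_pairs_lt) simp
  also have "\<dots> = lower_upper_form D X bl bu"
    unfolding lower_upper_form_def
  proof (intro sum.cong refl)
    fix p q :: 'n
    show "(if q < p then ?g p q + ?g q p else 0)
      = (if q < p then (D$p$p - D$q$q) * (X$p$p - X$q$q) * bl$p$q * bu$q$p else 0)"
    proof (cases "q < p")
      case True
      then have "bu$p$q = 0" "bl$q$p = 0" using L U by (auto simp: strictly_lower_def strictly_upper_def)
      then show ?thesis using True by (simp add: algebra_simps)
    qed simp
  qed
  finally show ?thesis .
qed

lemma clinear_lower_upper_form: "clinear_fun (lower_upper_form D X bl)"
  unfolding clinear_fun_def
proof (intro conjI allI)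
  fix x y show "lower_upper_form D X bl (x + y) = lower_upper_form D X bl x + lower_upper_form D X bl y"
    unfolding lower_upper_form_def sum.distrib[symmetric] by (intro sum.cong refl) (simp add: algebra_simps)
next
  fix c x show "lower_upper_form D X bl (cscale c x) = c * lower_upper_form D X bl x"
    unfolding lower_upper_form_def sum_distrib_left by (intro sum.cong refl) (simp add: cscale_def)
qed

lemma lower_upper_form_zero: "lower_upper_form D X bl 0 = 0"
  unfolding lower_upper_form_def by (intro sum.neutral ballI) simp

lemma lower_upper_form_elem_mat:
  "lower_upper_form D X bl (elem_mat a b)
    = (if a < b then (D$b$b - D$a$a) * (X$b$b - X$a$a) * bl$b$a else 0)"
proof -
  have "lower_upper_form D X bl (elem_mat a b) = (\<Sum>p\<in>UNIV. \<Sum>q\<in>UNIV.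
      if p = b \<and> q = a then (if q < p then (D$p$p - D$q$q) * (X$p$p - X$q$q) * bl$p$q else 0) else 0)"
    unfolding lower_upper_form_def elem_mat_def by (intro sum.cong refl) auto
  also have "\<dots> = (\<Sum>p\<in>UNIV. if p = b then
      (if a < p then (D$p$p - D$a$a) * (X$p$p - X$a$a) * bl$p$a else 0) else 0)"
    by (intro sum.cong refl) (simp add: sum.delta' if_distrib cong: if_cong)
  finally show ?thesis by (simp add: sum.delta')
qed

lemma lower_upper_form_const_iff:
  fixes D X bl :: "'n::{finite,linorder} cmat"
  assumes D: "is_diag_reg D" and X: "is_diag X" and L: "strictly_lower bl"
  shows "(\<forall>bu bu'. strictly_upper bu \<and> strictly_upper bu' \<longrightarrow>
      lower_upper_form D X bl bu = lower_upper_form D X bl bu') \<longleftrightarrow> bl ** X = X ** bl"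
proof
  assume H: "\<forall>bu bu'. strictly_upper bu \<and> strictly_upper bu' \<longrightarrow>
      lower_upper_form D X bl bu = lower_upper_form D X bl bu'"
  have "(X$p$p - X$q$q) * bl$p$q = 0" for p q
  proof (cases "q < p")
    case True
    have "strictly_upper (elem_mat q p)" "strictly_upper (0::'n cmat)"
      using True by (auto simp: strictly_upper_def elem_mat_def)
    then have "lower_upper_form D X bl (elem_mat q p) = lower_upper_form D X bl 0"
      using H by blast
    then have "(D$p$p - D$q$q) * ((X$p$p - X$q$q) * bl$p$q) = 0"
      using True by (simp add: lower_upper_form_elem_mat lower_upper_form_zero mult.assoc)
    moreover have "D$p$p - D$q$q \<noteq> 0" using D True by (auto simp: is_diag_reg_def)
    ultimately show ?thesis by simp
  next
    case False
    then show ?thesis using L by (simp add: strictly_lower_def)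
  qed
  then show "bl ** X = X ** bl" using commute_diag_iff_entries[OF X] by blast
next
  assume "bl ** X = X ** bl"
  then have z: "(X$p$p - X$q$q) * bl$p$q = 0" for p q using commute_diag_iff_entries[OF X] by blast
  have "(D$p$p - D$q$q) * (X$p$p - X$q$q) * bl$p$q * bu$q$p
      = (D$p$p - D$q$q) * ((X$p$p - X$q$q) * bl$p$q) * bu$q$p" for p q bu
    by (simp only: mult.assoc)
  then have "(D$p$p - D$q$q) * (X$p$p - X$q$q) * bl$p$q * bu$q$p = 0" for p q bu
    by (simp only: z mult_zero_left mult_zero_right)
  then have "lower_upper_form D X bl bu = 0" for bu
    unfolding lower_upper_form_def by (intro sum.neutral ballI) simp
  then show "\<forall>bu bu'. strictly_upper bu \<and> strictly_upper bu' \<longrightarrow>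
      lower_upper_form D X bl bu = lower_upper_form D X bl bu'" by simp
qed

lemma phi_affine_in_high_coeffs:
  assumes "k \<ge> 1"
  shows "\<exists>c L. (\<forall>i. clinear_fun (L i)) \<and>
    (\<forall>b'. (\<forall>i. 1 \<le> i \<and> i < (k + 1) div 2 \<longrightarrow> b' i = b i) \<longrightarrow>
      phi k C X b' = c + (\<Sum>i\<in>{(k + 1) div 2..<k}. L i (b' i)))"
proof (intro exI conjI allI impI)
  let ?m = "(k + 1) div 2"
  show "clinear_fun (\<lambda>M. phi_deriv k C X (low_coeffs ?m b) (ser_monom i M))" for i
    by (rule clinear_phi_deriv_monom)
  fix b' assume "\<forall>i. 1 \<le> i \<and> i < ?m \<longrightarrow> b' i = b i"
  then have "low_coeffs ?m b' = low_coeffs ?m b" by (rule low_coeffs_cong)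
  moreover have "k \<le> 2 * ?m" "1 \<le> ?m" using assms by presburger+
  ultimately show "phi k C X b' = phi k C X (low_coeffs ?m b)
      + (\<Sum>i\<in>{?m..<k}. phi_deriv k C X (low_coeffs ?m b) (ser_monom i (b' i)))"
    using phi_decomp[OF assms, of ?m C X b'] by simp
qed

lemma phi_const_iff_deriv_monoms_vanish:
  assumes k: "k \<ge> 1" and m: "1 \<le> m" "k \<le> 2 * m" and b: "in_Bod k b"
  shows "(\<forall>b'. in_Bod k b' \<and> (\<forall>i. 1 \<le> i \<and> i < m \<longrightarrow> b' i = b i) \<longrightarrow>
      phi k C X b' = phi k C X b)
    \<longleftrightarrow> (\<forall>i M. m \<le> i \<and> i < k \<and> is_offdiag M \<longrightarrow>
      phi_deriv k C X (low_coeffs m b) (ser_monom i M) = 0)"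
proof -
  let ?b0 = "low_coeffs m b"
  let ?agree = "\<lambda>b'. \<forall>i. 1 \<le> i \<and> i < m \<longrightarrow> b' i = b i"
  have decomp: "phi k C X b' = phi k C X ?b0 + (\<Sum>i\<in>{m..<k}. phi_deriv k C X ?b0 (ser_monom i (b' i)))"
    if "?agree b'" for b'
    using phi_decomp[OF k m(2,1), of C X b'] low_coeffs_cong[OF that] by simp
  have b0: "in_Bod k ?b0" "?agree ?b0"
    using b by (auto simp: in_Bod_def low_coeffs_def is_offdiag_def)
  show ?thesis
  proof (intro iffI allI impI)
    fix i and M :: "'a cmat"
    assume H: "\<forall>b'. in_Bod k b' \<and> ?agree b' \<longrightarrow> phi k C X b' = phi k C X b"
      and iM: "m \<le> i \<and> i < k \<and> is_offdiag M"
    define b' where "b' = ?b0(i := M)"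
    have b': "in_Bod k b'" "?agree b'"
      using b0 iM m by (auto simp: b'_def in_Bod_def low_coeffs_def)
    have "phi_deriv k C X ?b0 (ser_monom j (b' j)) = (if j = i then phi_deriv k C X ?b0 (ser_monom i M) else 0)"
      if "j \<in> {m..<k}" for j
      using that by (simp add: b'_def low_coeffs_def ser_monom_zero phi_deriv_zero)
    then have "phi k C X b' = phi k C X ?b0 + phi_deriv k C X ?b0 (ser_monom i M)"
      using decomp[OF b'(2)] iM by simp
    moreover have "phi k C X b' = phi k C X ?b0" using H b' b0 by metis
    ultimately show "phi_deriv k C X ?b0 (ser_monom i M) = 0" by simp
  next
    fix b' assume H: "\<forall>i M. m \<le> i \<and> i < k \<and> is_offdiag M \<longrightarrow> phi_deriv k C X ?b0 (ser_monom i M) = 0"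
      and b': "in_Bod k b' \<and> ?agree b'"
    have const: "phi k C X b'' = phi k C X ?b0" if b'': "in_Bod k b''" "?agree b''" for b''
    proof -
      have "phi_deriv k C X ?b0 (ser_monom i (b'' i)) = 0" if "i \<in> {m..<k}" for i
        using H b''(1) that m(1) by (simp add: in_Bod_def)
      then show ?thesis using decomp[OF b''(2)] by simp
    qed
    show "phi k C X b' = phi k C X b" using const[of b'] const[of b] b' b by simp
  qed
qed

lemma phi_independent_of_high_coeffs_iff:
  assumes k: "k \<ge> 2" and C: "\<forall>l. 1 \<le> l \<and> l \<le> k \<longrightarrow> is_diag (C l)" and Ck: "is_diag_reg (C k)"
    and b: "in_Bod k b"
  shows "(\<forall>b'. in_Bod k b' \<and> (\<forall>i. 1 \<le> i \<and> i < (k + 1) div 2 \<longrightarrow> b' i = b i) \<longrightarrow>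
      phi k C X b' = phi k C X b)
    \<longleftrightarrow> is_diag X \<and> (\<forall>i. 1 \<le> i \<and> i \<le> (k - 2) div 2 \<longrightarrow> b i ** X = X ** b i)"
proof -
  define m where "m = (k + 1) div 2"
  have m: "1 \<le> m" "m < k" "k \<le> 2 * m"
    using k unfolding m_def by presburger+
  have half: "(k - 2) div 2 = k - 1 - m"
    using k unfolding m_def by (cases "even k") (auto elim!: evenE oddE)
  have "(\<forall>b'. in_Bod k b' \<and> (\<forall>i. 1 \<le> i \<and> i < m \<longrightarrow> b' i = b i) \<longrightarrow> phi k C X b' = phi k C X b)
      \<longleftrightarrow> (\<forall>i M. m \<le> i \<and> i < k \<and> is_offdiag M \<longrightarrow> phi_deriv k C X (low_coeffs m b) (ser_monom i M) = 0)"
    using k m by (intro phi_const_iff_deriv_monoms_vanish b) auto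
  also have "\<dots> \<longleftrightarrow> is_diag X \<and> commutes_upto k (low_coeffs m b) X (k - 1 - m)"
    by (rule phi_deriv_monoms_vanish_iff[OF m(2) C Ck])
  also have "\<dots> \<longleftrightarrow> is_diag X \<and> (\<forall>i. 1 \<le> i \<and> i \<le> (k - 2) div 2 \<longrightarrow> b i ** X = X ** b i)"
    using commutes_upto_low_coeffs_iff[of "k - 1 - m" m k b X] m half by simp
  finally show ?thesis unfolding m_def .
qed

lemma phi_update_middle_coeff:
  assumes k: "k = 2 * q + 1" and q: "q \<ge> 1" and C: "\<forall>l. 1 \<le> l \<and> l \<le> k \<longrightarrow> is_diag (C l)"
    and X: "is_diag X" and comm: "\<forall>i. 1 \<le> i \<and> i < q \<longrightarrow> b i ** X = X ** b i"
    and L: "strictly_lower bl" and U: "strictly_upper bu"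
  shows "phi k C X (b(q := bl + bu)) = trace (C 1 ** X) + lower_upper_form (C k) X bl bu"
proof -
  let ?bq = "b(q := bl + bu)"
  let ?b1 = "low_coeffs (q + 1) ?bq"
  have b1: "commutes_upto k ?b1 X (k - 1 - (q + 1))"
    using commutes_upto_low_coeffs_iff[of "q - 1" "q + 1" k ?bq X] comm k q by auto
  have b1q: "?b1 q = bl + bu" using q by (simp add: low_coeffs_def)
  have "phi k C X ?bq = phi k C X ?b1"
    using phi_decomp[of k "q + 1" C X ?bq] phi_deriv_monom_eq_0[OF X C b1] k by simp
  also have "\<dots> = trace (C 1 ** X) + trace (C k ** ((bl + bu) ** ((bl + bu) ** X - X ** (bl + bu))))"
    by (rule phi_eq_middle_quadratic[OF k q X C, of ?b1, unfolded b1q])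
      (use comm q in \<open>auto simp: low_coeffs_def\<close>)
  also have "\<dots> = trace (C 1 ** X) + lower_upper_form (C k) X bl bu"
    using trace_quadratic_eq_lower_upper_form[OF _ X L U, of "C k"] C k by simp
  finally show ?thesis .
qed

lemma phi_middle_coeff:
  assumes k: "k \<ge> 2" "odd k" and C: "\<forall>l. 1 \<le> l \<and> l \<le> k \<longrightarrow> is_diag (C l)" and Ck: "is_diag_reg (C k)"
    and X: "is_diag X" and comm: "\<forall>i. 1 \<le> i \<and> i \<le> (k - 2) div 2 \<longrightarrow> b i ** X = X ** b i"
    and lower: "strictly_lower bl"
  shows "(\<exists>c L. clinear_fun L \<and>
      (\<forall>bu. strictly_upper bu \<longrightarrow> phi k C X (b((k - 1) div 2 := bl + bu)) = c + L bu))
    \<and> ((\<forall>bu bu'. strictly_upper bu \<and> strictly_upper bu' \<longrightarrow>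
        phi k C X (b((k - 1) div 2 := bl + bu)) = phi k C X (b((k - 1) div 2 := bl + bu')))
      \<longleftrightarrow> bl ** X = X ** bl)"
proof -
  define q where "q = (k - 1) div 2"
  have q: "k = 2 * q + 1" "q \<ge> 1" "(k - 2) div 2 = q - 1" using k unfolding q_def by presburger+
  have "\<forall>i. 1 \<le> i \<and> i < q \<longrightarrow> b i ** X = X ** b i" using comm q by auto
  note phi_bu = phi_update_middle_coeff[OF q(1,2) C X this lower]
  show ?thesis unfolding q_def[symmetric]
  proof
    show "\<exists>c L. clinear_fun L \<and> (\<forall>bu. strictly_upper bu \<longrightarrow> phi k C X (b(q := bl + bu)) = c + L bu)"
      using phi_bu clinear_lower_upper_form by blast
    show "(\<forall>bu bu'. strictly_upper bu \<and> strictly_upper bu' \<longrightarrow>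
        phi k C X (b(q := bl + bu)) = phi k C X (b(q := bl + bu'))) \<longleftrightarrow> bl ** X = X ** bl"
      using lower_upper_form_const_iff[OF Ck X lower] by (simp add: phi_bu)
  qed
qed

theorem mainTheorem10:
  fixes k :: nat and C :: "nat \<Rightarrow> complex^('n::{finite,linorder})^('n::{finite,linorder})" and X :: "complex^('n::{finite,linorder})^('n::{finite,linorder})"
  assumes hk: "k \<ge> 1"
    and hC: "\<forall>i. 1 \<le> i \<and> i \<le> k \<longrightarrow> is_diag (C i)"
    and hCk: "is_diag_reg (C k)"
  shows
    "(\<forall>b. in_Bod k b \<longrightarrow>
        (\<exists>c L. (\<forall>i. clinear_fun (L i)) \<and>
           (\<forall>b'. in_Bod k b' \<and> (\<forall>i. 1 \<le> i \<and> i < (k + 1) div 2 \<longrightarrow> b' i = b i) \<longrightarrow>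
              phi k C X b' = c + (\<Sum>i\<in>{(k + 1) div 2..<k}. L i (b' i)))))
   \<and> (k \<ge> 2 \<longrightarrow> (\<forall>b. in_Bod k b \<longrightarrow>
        ((\<forall>b'. in_Bod k b' \<and> (\<forall>i. 1 \<le> i \<and> i < (k + 1) div 2 \<longrightarrow> b' i = b i) \<longrightarrow>
              phi k C X b' = phi k C X b)
         \<longleftrightarrow> (is_diag X \<and> (\<forall>i. 1 \<le> i \<and> i \<le> (k - 2) div 2 \<longrightarrow> b i ** X = X ** b i)))))
   \<and> (k \<ge> 2 \<and> odd k \<longrightarrow> (\<forall>b bl. in_Bod k b \<and> is_diag X
          \<and> (\<forall>i. 1 \<le> i \<and> i \<le> (k - 2) div 2 \<longrightarrow> b i ** X = X ** b i)
          \<and> strictly_lower bl \<longrightarrow>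
        (\<exists>c L. clinear_fun L \<and>
           (\<forall>bu. strictly_upper bu \<longrightarrow>
              phi k C X (b((k - 1) div 2 := bl + bu)) = c + L bu))
        \<and> ((\<forall>bu bu'. strictly_upper bu \<and> strictly_upper bu' \<longrightarrow>
              phi k C X (b((k - 1) div 2 := bl + bu)) = phi k C X (b((k - 1) div 2 := bl + bu')))
           \<longleftrightarrow> bl ** X = X ** bl)))"
proof (intro conjI allI impI; (elim conjE)?)
  fix b :: "nat \<Rightarrow> 'n cmat"
  obtain c L where "\<forall>i. clinear_fun (L i)"
    "\<forall>b'. (\<forall>i. 1 \<le> i \<and> i < (k + 1) div 2 \<longrightarrow> b' i = b i) \<longrightarrow>
      phi k C X b' = c + (\<Sum>i\<in>{(k + 1) div 2..<k}. L i (b' i))"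
    using phi_affine_in_high_coeffs[OF hk, where b = b] by blast
  then show "\<exists>c L. (\<forall>i. clinear_fun (L i)) \<and>
      (\<forall>b'. in_Bod k b' \<and> (\<forall>i. 1 \<le> i \<and> i < (k + 1) div 2 \<longrightarrow> b' i = b i) \<longrightarrow>
        phi k C X b' = c + (\<Sum>i\<in>{(k + 1) div 2..<k}. L i (b' i)))"
    by blast
qed (rule phi_independent_of_high_coeffs_iff[OF _ hC hCk] conjunct1[OF phi_middle_coeff[OF _ _ hC hCk]]
      conjunct2[OF phi_middle_coeff[OF _ _ hC hCk]]; assumption)+

end
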